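(* Let $A$ be a real $B\times N'$ matrix of rank $r\ge1$ with nonzero singular values $\sigma_1\ge\sigma_2\ge\dots\ge\sigma_r$, all lying in $(0,1]$, left singular vectors $\boldsymbol\xi_j\in\mathbb{R}^B$ and right singular vectors $\hat{\boldsymbol\xi}_j\in\mathbb{R}^{N'}$ (orthonormal, $A\hat{\boldsymbol\xi}_j=\sigma_j\boldsymbol\xi_j$, $A^T\boldsymbol\xi_j=\sigma_j\hat{\boldsymbol\xi}_j$). Let $\boldsymbol b=\sum_{j=1}^r b_j\boldsymbol\xi_j$ and $\boldsymbol b^\delta=\sum_{j=1}^r b^\delta_j\boldsymbol\xi_j$ lie in the range of $A$, let $\boldsymbol x=\sum_{j=1}^r \frac{b_j}{\sigma_j}\hat{\boldsymbol\xi}_j$ be the minimal-norm solution of $A\boldsymbol x=\boldsymbol b$, and for a filter function $\phi(s,\alpha)$ let $$\boldsymbol x^{\alpha,\delta}=\sum_{j=1}^r b_j^\delta\frac{\phi(\sigma_j,\alpha)}{\sigma_j}\hat{\boldsymbol\xi}_j.$$ Let $f:[0,\infty)\to(0,1]$ be continuous and strictly decreasing with $f(0)=1$, $f(j)=\sigma_j$ for $j=1,\dots,r$, and $f(t)\to0$ as $t\to\infty$, and assume that, for the fixed $\alpha>0$, the functions $t\mapsto|1-\phi(f(t),\alpha)|$ and $t\mapsto|\phi(f(t),\alpha)|/f(t)$ are nondecreasing on $[0,r+1]$. Then for every $p\in[1,\infty)$ there is a constant $C_1$, depending only on $p$ and on the matrix $A$ (through its dimensions and singular vectors), and not on $\alpha,\phi,\boldsymbol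 b,\boldsymbol b^\delta$, such that $$\|\boldsymbol x-\boldsymbol x^{\alpha,\delta}\|_p\le C_1\|\boldsymbol x\|_\infty\,\|1-\phi(f(\cdot),\alpha)\|_{L^p(0,r+1)}+C_1\|\boldsymbol b-\boldsymbol b^\delta\|_\infty\,\|\phi(f(\cdot),\alpha)\,f(\cdot)^{-1}\|_{L^p(0,r+1)}.$$
   Context: Filtered linear regularization of the ill-conditioned linear system $A\boldsymbol x=\boldsymbol b$ arising from discretizing a convolution (averaging) operator; $\boldsymbol b^\delta$ is a perturbed right-hand side. $\|\cdot\|_p$ and $\|\cdot\|_\infty$ are vector norms; $\|\cdot\|_{L^p(0,r+1)}$ is the Lebesgue norm of a function of $t\in(0,r+1)$. *)

theory Defs
  imports "HOL-Analysis.Analysis"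
begin

definition vec_pnorm :: "real \<Rightarrow> real^'n \<Rightarrow> real" where
  "vec_pnorm p x = (\<Sum>i\<in>UNIV. \<bar>x $ i\<bar> powr p) powr (1 / p)"

definition vec_infnorm :: "real^'n \<Rightarrow> real" where
  "vec_infnorm x = Max (range (\<lambda>i. \<bar>x $ i\<bar>))"

definition Lp_norm_interval :: "real \<Rightarrow> real \<Rightarrow> (real \<Rightarrow> real) \<Rightarrow> real" where
  "Lp_norm_interval p T g = (integral {0..T} (\<lambda>t. \<bar>g t\<bar> powr p)) powr (1 / p)"

end

theory Submission
  imports Defs
begin

text \<open>
  In the orthonormal bases the error has the coefficients
  \<open>x\<^sub>j (1 - \<phi>(\<sigma>\<^sub>j,\<alpha>)) + (b\<^sub>j - b\<^sup>\<delta>\<^sub>j) \<phi>(\<sigma>\<^sub>j,\<alpha>)/\<sigma>\<^sub>j\<close>.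
  Since \<open>\<sigma>\<^sub>j = f(j)\<close> and both filter quantities are monotone in \<open>t\<close>, their value at
  \<open>t = j\<close> is bounded by their mean over \<open>[j, j+1] \<subseteq> [0, r+1]\<close>, hence by their
  \<open>L\<^sup>p(0,r+1)\<close> norm. The coefficients \<open>x\<^sub>j\<close> and \<open>b\<^sub>j - b\<^sup>\<delta>\<^sub>j\<close> are inner products with unit
  vectors, hence bounded by dimension times maximum norm, and all vector norms are
  comparable with dimension-dependent constants. Only the orthonormality of the
  singular vectors enters; the singular value relations and the rank are not needed.
\<close>

lemma mono_on_le_integral:
  fixes G :: "real \<Rightarrow> real"
  assumes mono: "mono_on {0..T} G" and nonneg: "\<forall>t\<in>{0..T}. 0 \<le> G t"
    and "0 \<le> a" "a + 1 \<le> T"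
  shows "G a \<le> integral {0..T} G"
proof -
  have sub: "{a..a+1} \<subseteq> {0..T}" using assms by auto
  have int_T: "G integrable_on {0..T}" using mono by (rule integrable_on_mono_on)
  have int_a: "G integrable_on {a..a+1}"
    using mono_on_subset[OF mono sub] by (rule integrable_on_mono_on)
  have "G a = integral {a..a+1} (\<lambda>_. G a)" by simp
  also have "\<dots> \<le> integral {a..a+1} G"
    using sub \<open>0 \<le> a\<close> by (intro integral_le int_a integrable_const_ivl mono_onD[OF mono]) auto
  also have "\<dots> \<le> integral {0..T} G"
    by (rule integral_subset_le[OF sub int_a int_T nonneg])
  finally show ?thesis .
qed

lemma abs_le_Lp_norm_interval:
  fixes h :: "real \<Rightarrow> real"
  assumes mono: "mono_on {0..T} (\<lambda>t. \<bar>h t\<bar>)" and "p \<ge> 1" "0 \<le> a" "a + 1 \<le> T"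
  shows "\<bar>h a\<bar> \<le> Lp_norm_interval p T h"
proof -
  let ?G = "\<lambda>t. \<bar>h t\<bar> powr p"
  have "mono_on {0..T} ?G"
    using mono \<open>p \<ge> 1\<close> by (auto simp: mono_on_def intro!: powr_mono2)
  then have "?G a \<le> integral {0..T} ?G"
    using assms by (intro mono_on_le_integral) auto
  then have "?G a powr (1/p) \<le> integral {0..T} ?G powr (1/p)"
    using \<open>p \<ge> 1\<close> by (intro powr_mono2) auto
  then show ?thesis
    using \<open>p \<ge> 1\<close> by (simp add: Lp_norm_interval_def powr_powr)
qed

lemma component_le_vec_infnorm: "\<bar>u $ i\<bar> \<le> vec_infnorm u"
  unfolding vec_infnorm_def by (rule Max_ge) auto

lemma vec_infnorm_nonneg: "0 \<le> vec_infnorm u"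
  using component_le_vec_infnorm[of u undefined] by linarith

lemma abs_component_le_1_if_unit:
  fixes v :: "real^'k"
  assumes "v \<bullet> v = 1"
  shows "\<bar>v $ i\<bar> \<le> 1"
  using component_le_norm_cart[of v i] assms by (simp add: norm_eq_sqrt_inner)

lemma abs_inner_le_card_vec_infnorm:
  fixes u v :: "real^'k"
  assumes "\<And>i. \<bar>v $ i\<bar> \<le> 1"
  shows "\<bar>u \<bullet> v\<bar> \<le> real CARD('k) * vec_infnorm u"
proof -
  have "\<bar>u \<bullet> v\<bar> \<le> (\<Sum>i\<in>UNIV. \<bar>u $ i * v $ i\<bar>)"
    unfolding inner_vec_def by (simp add: sum_abs)
  also have "\<dots> \<le> (\<Sum>i\<in>(UNIV::'k set). vec_infnorm u)"
  proof (rule sum_mono)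
    fix i
    have "\<bar>u $ i\<bar> * \<bar>v $ i\<bar> \<le> \<bar>u $ i\<bar> * 1" using assms[of i] by (intro mult_left_mono) auto
    then show "\<bar>u $ i * v $ i\<bar> \<le> vec_infnorm u"
      using component_le_vec_infnorm[of u i] by (simp add: abs_mult)
  qed
  finally show ?thesis by simp
qed

lemma vec_pnorm_le_card_mult:
  fixes v :: "real^'k"
  assumes bound: "\<And>i. \<bar>v $ i\<bar> \<le> c" and "p \<ge> 1"
  shows "vec_pnorm p v \<le> real CARD('k) * c"
proof -
  have "0 \<le> c" using bound[of undefined] by linarith
  have card: "1 \<le> real CARD('k)" by (simp add: Suc_leI)
  have "(\<Sum>i\<in>UNIV. \<bar>v $ i\<bar> powr p) \<le> (\<Sum>i\<in>(UNIV::'k set). c powr p)"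
    using assms by (intro sum_mono powr_mono2) auto
  then have "vec_pnorm p v \<le> (real CARD('k) * c powr p) powr (1/p)"
    unfolding vec_pnorm_def using \<open>p \<ge> 1\<close> by (intro powr_mono2) (auto intro!: sum_nonneg)
  also have "\<dots> = real CARD('k) powr (1/p) * c"
    using \<open>p \<ge> 1\<close> \<open>0 \<le> c\<close> by (simp add: powr_mult powr_powr)
  also have "\<dots> \<le> real CARD('k) powr 1 * c"
    using card \<open>p \<ge> 1\<close> \<open>0 \<le> c\<close> by (intro mult_right_mono powr_mono) auto
  finally show ?thesis using card by simp
qed

lemma inner_sum_orthonormal:
  fixes v :: "'i \<Rightarrow> 'a::real_inner"
  assumes "finite S" "j \<in> S"
    and orth: "\<And>i k. i \<in> S \<Longrightarrow> k \<in> S \<Longrightarrow> v i \<bullet> v k = (if i = k then 1 else 0)"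
  shows "(\<Sum>k\<in>S. c k *\<^sub>R v k) \<bullet> v j = c j"
proof -
  have "(\<Sum>k\<in>S. c k *\<^sub>R v k) \<bullet> v j = (\<Sum>k\<in>S. if k = j then c k else 0)"
    unfolding inner_sum_left using \<open>j \<in> S\<close> by (intro sum.cong) (auto simp: orth)
  then show ?thesis using assms by simp
qed

lemma vec_pnorm_sum_le:
  fixes v :: "'i \<Rightarrow> real^'k"
  assumes "finite S" "p \<ge> 1"
    and coeff: "\<And>j. j \<in> S \<Longrightarrow> \<bar>c j\<bar> \<le> K"
    and unit: "\<And>j i. j \<in> S \<Longrightarrow> \<bar>v j $ i\<bar> \<le> 1"
  shows "vec_pnorm p (\<Sum>j\<in>S. c j *\<^sub>R v j) \<le> real CARD('k) * (real (card S) * K)"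
proof (rule vec_pnorm_le_card_mult[OF _ \<open>p \<ge> 1\<close>])
  fix i
  have "\<bar>(\<Sum>j\<in>S. c j *\<^sub>R v j) $ i\<bar> \<le> (\<Sum>j\<in>S. \<bar>c j\<bar> * \<bar>v j $ i\<bar>)"
    unfolding sum_component by (simp add: abs_mult[symmetric] sum_abs)
  also have "\<dots> \<le> (\<Sum>j\<in>S. K)"
  proof (rule sum_mono)
    fix j assume "j \<in> S"
    have "\<bar>c j\<bar> * \<bar>v j $ i\<bar> \<le> \<bar>c j\<bar>"
      using unit[OF \<open>j \<in> S\<close>] by (simp add: mult_left_le)
    then show "\<bar>c j\<bar> * \<bar>v j $ i\<bar> \<le> K" using coeff[OF \<open>j \<in> S\<close>] by linarith
  qed
  finally show "\<bar>(\<Sum>j\<in>S. c j *\<^sub>R v j) $ i\<bar> \<le> real (card S) * K" by simp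
qed

lemma filtered_coeff_le:
  fixes \<sigma> w b b\<delta> :: real
  assumes "\<sigma> \<noteq> 0" "\<bar>b / \<sigma>\<bar> \<le> X" "\<bar>b - b\<delta>\<bar> \<le> D" "\<bar>1 - w\<bar> \<le> L1" "\<bar>w / \<sigma>\<bar> \<le> L2"
  shows "\<bar>b / \<sigma> - b\<delta> * w / \<sigma>\<bar> \<le> X * L1 + D * L2"
proof -
  have "b / \<sigma> - b\<delta> * w / \<sigma> = b / \<sigma> * (1 - w) + (b - b\<delta>) * (w / \<sigma>)"
    using \<open>\<sigma> \<noteq> 0\<close> by (simp add: field_simps)
  also have "\<bar>\<dots>\<bar> \<le> \<bar>b / \<sigma>\<bar> * \<bar>1 - w\<bar> + \<bar>b - b\<delta>\<bar> * \<bar>w / \<sigma>\<bar>"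
    by (metis abs_mult abs_triangle_ineq)
  also have "\<dots> \<le> X * L1 + D * L2"
    using assms abs_ge_zero[of "b / \<sigma>"] by (intro add_mono mult_mono) linarith+
  finally show ?thesis .
qed

lemma filtered_expansion_error_le:
  fixes \<xi> :: "nat \<Rightarrow> real^'m" and \<xi>h :: "nat \<Rightarrow> real^'n"
    and \<sigma> w bc bdc :: "nat \<Rightarrow> real" and x :: "real^'n" and b b\<delta> :: "real^'m"
  assumes \<xi>_orth: "\<And>i j. i \<in> {1..r} \<Longrightarrow> j \<in> {1..r} \<Longrightarrow> \<xi> i \<bullet> \<xi> j = (if i = j then 1 else 0)"
    and \<xi>h_orth: "\<And>i j. i \<in> {1..r} \<Longrightarrow> j \<in> {1..r} \<Longrightarrow> \<xi>h i \<bullet> \<xi>h j = (if i = j then 1 else 0)"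
    and \<sigma>_pos: "\<And>j. j \<in> {1..r} \<Longrightarrow> 0 < \<sigma> j"
    and w_res: "\<And>j. j \<in> {1..r} \<Longrightarrow> \<bar>1 - w j\<bar> \<le> L1"
    and w_amp: "\<And>j. j \<in> {1..r} \<Longrightarrow> \<bar>w j / \<sigma> j\<bar> \<le> L2"
    and "p \<ge> 1"
  defines "x \<equiv> \<Sum>j=1..r. (bc j / \<sigma> j) *\<^sub>R \<xi>h j"
    and "b \<equiv> \<Sum>j=1..r. bc j *\<^sub>R \<xi> j"
    and "b\<delta> \<equiv> \<Sum>j=1..r. bdc j *\<^sub>R \<xi> j"
  shows "vec_pnorm p (x - (\<Sum>j=1..r. (bdc j * w j / \<sigma> j) *\<^sub>R \<xi>h j))
    \<le> real CARD('n) * (real r * (real CARD('n) * vec_infnorm x * L1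
                                 + real CARD('m) * vec_infnorm (b - b\<delta>) * L2))"
proof -
  have "x - (\<Sum>j=1..r. (bdc j * w j / \<sigma> j) *\<^sub>R \<xi>h j)
      = (\<Sum>j=1..r. (bc j / \<sigma> j - bdc j * w j / \<sigma> j) *\<^sub>R \<xi>h j)"
    unfolding x_def by (simp add: sum_subtractf[symmetric] scaleR_diff_left)
  also have "vec_pnorm p \<dots> \<le> real CARD('n) * (real (card {1..r})
      * (real CARD('n) * vec_infnorm x * L1 + real CARD('m) * vec_infnorm (b - b\<delta>) * L2))"
  proof (rule vec_pnorm_sum_le[OF _ \<open>p \<ge> 1\<close>])
    fix j i assume j: "j \<in> {1..r}"
    show "\<bar>\<xi>h j $ i\<bar> \<le> 1" using \<xi>h_orth[OF j j] by (simp add: abs_component_le_1_if_unit)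
    have "x \<bullet> \<xi>h j = bc j / \<sigma> j"
      unfolding x_def using j \<xi>h_orth by (intro inner_sum_orthonormal) auto
    then have x_coeff: "\<bar>bc j / \<sigma> j\<bar> \<le> real CARD('n) * vec_infnorm x"
      using abs_inner_le_card_vec_infnorm[of "\<xi>h j" x] \<xi>h_orth[OF j j]
      by (simp add: abs_component_le_1_if_unit)
    have "(b - b\<delta>) \<bullet> \<xi> j = bc j - bdc j"
      unfolding b_def b\<delta>_def sum_subtractf[symmetric] scaleR_diff_left[symmetric]
      using j \<xi>_orth by (intro inner_sum_orthonormal) auto
    then have b_coeff: "\<bar>bc j - bdc j\<bar> \<le> real CARD('m) * vec_infnorm (b - b\<delta>)"
      using abs_inner_le_card_vec_infnorm[of "\<xi> j" "b - b\<delta>"] \<xi>_orth[OF j j]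
      by (simp add: abs_component_le_1_if_unit)
    show "\<bar>bc j / \<sigma> j - bdc j * w j / \<sigma> j\<bar>
        \<le> real CARD('n) * vec_infnorm x * L1 + real CARD('m) * vec_infnorm (b - b\<delta>) * L2"
      using \<sigma>_pos[OF j] by (intro filtered_coeff_le x_coeff b_coeff w_res w_amp j) auto
  qed auto
  finally show ?thesis by simp
qed

lemma filtered_solution_error_le:
  fixes \<xi> :: "nat \<Rightarrow> real^'m" and \<xi>h :: "nat \<Rightarrow> real^'n"
    and \<sigma> bc bdc :: "nat \<Rightarrow> real" and f :: "real \<Rightarrow> real" and \<phi> :: "real \<Rightarrow> real \<Rightarrow> real"
    and x :: "real^'n" and b b\<delta> :: "real^'m" and C L1 L2 :: real
  assumes \<xi>_orth: "\<And>i j. i \<in> {1..r} \<Longrightarrow> j \<in> {1..r} \<Longrightarrow> \<xi> i \<bullet> \<xi> j = (if i = j then 1 else 0)"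
    and \<xi>h_orth: "\<And>i j. i \<in> {1..r} \<Longrightarrow> j \<in> {1..r} \<Longrightarrow> \<xi>h i \<bullet> \<xi>h j = (if i = j then 1 else 0)"
    and \<sigma>_pos: "\<And>j. j \<in> {1..r} \<Longrightarrow> 0 < \<sigma> j"
    and "p \<ge> 1"
    and f_pos: "\<forall>t\<ge>0. 0 < f t"
    and f_nodes: "\<forall>j\<in>{1..r}. f (real j) = \<sigma> j"
    and res_mono: "mono_on {0..real r + 1} (\<lambda>t. \<bar>1 - \<phi> (f t) \<alpha>\<bar>)"
    and amp_mono: "mono_on {0..real r + 1} (\<lambda>t. \<bar>\<phi> (f t) \<alpha>\<bar> / f t)"
  defines "x \<equiv> \<Sum>j=1..r. (bc j / \<sigma> j) *\<^sub>R \<xi>h j"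
    and "b \<equiv> \<Sum>j=1..r. bc j *\<^sub>R \<xi> j"
    and "b\<delta> \<equiv> \<Sum>j=1..r. bdc j *\<^sub>R \<xi> j"
    and "C \<equiv> real r * real CARD('n) * (real CARD('n) + real CARD('m))"
    and "L1 \<equiv> Lp_norm_interval p (real r + 1) (\<lambda>t. 1 - \<phi> (f t) \<alpha>)"
    and "L2 \<equiv> Lp_norm_interval p (real r + 1) (\<lambda>t. \<phi> (f t) \<alpha> / f t)"
  shows "vec_pnorm p (x - (\<Sum>j=1..r. (bdc j * \<phi> (\<sigma> j) \<alpha> / \<sigma> j) *\<^sub>R \<xi>h j))
    \<le> C * vec_infnorm x * L1 + C * vec_infnorm (b - b\<delta>) * L2"
proof -
  define N M X D where "N = real CARD('n)" and "M = real CARD('m)"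
    and "X = vec_infnorm x" and "D = vec_infnorm (b - b\<delta>)"
  have nonneg: "0 \<le> N" "0 \<le> M" "0 \<le> X" "0 \<le> D" "0 \<le> L1" "0 \<le> L2"
    by (simp_all add: N_def M_def X_def D_def L1_def L2_def vec_infnorm_nonneg Lp_norm_interval_def)
  have amp_mono': "mono_on {0..real r + 1} (\<lambda>t. \<bar>\<phi> (f t) \<alpha> / f t\<bar>)"
  proof (rule mono_onI)
    fix s t assume st: "s \<in> {0..real r + 1}" "t \<in> {0..real r + 1}" "s \<le> t"
    then have "0 < f s" "0 < f t" using f_pos by auto
    then show "\<bar>\<phi> (f s) \<alpha> / f s\<bar> \<le> \<bar>\<phi> (f t) \<alpha> / f t\<bar>"
      using mono_onD[OF amp_mono st] by (simp add: abs_div)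
  qed
  have nodes: "0 \<le> real j" "real j + 1 \<le> real r + 1" if "j \<in> {1..r}" for j
    using that by auto
  have "vec_pnorm p (x - (\<Sum>j=1..r. (bdc j * \<phi> (\<sigma> j) \<alpha> / \<sigma> j) *\<^sub>R \<xi>h j))
      \<le> N * (real r * (N * X * L1 + M * D * L2))"
    unfolding N_def M_def X_def D_def x_def b_def b\<delta>_def
  proof (rule filtered_expansion_error_le[OF \<xi>_orth \<xi>h_orth \<sigma>_pos])
    fix j assume j: "j \<in> {1..r}"
    show "\<bar>1 - \<phi> (\<sigma> j) \<alpha>\<bar> \<le> L1"
      using abs_le_Lp_norm_interval[OF res_mono \<open>p \<ge> 1\<close> nodes[OF j]] f_nodes j
      by (simp add: L1_def)
    show "\<bar>\<phi> (\<sigma> j) \<alpha> / \<sigma> j\<bar> \<le> L2"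
      using abs_le_Lp_norm_interval[OF amp_mono' \<open>p \<ge> 1\<close> nodes[OF j]] f_nodes j
      by (simp add: L2_def)
  qed (use \<open>p \<ge> 1\<close> in auto)
  also have "\<dots> \<le> C * X * L1 + C * D * L2"
  proof -
    have "C * X * L1 + C * D * L2
        = N * (real r * (N * X * L1 + M * D * L2)) + real r * N * (M * X * L1 + N * D * L2)"
      by (simp add: C_def N_def M_def algebra_simps)
    then show ?thesis using nonneg by simp
  qed
  finally show ?thesis by (simp add: X_def D_def)
qed

theorem mainTheorem2:
  fixes A :: "real^'n^'m"
    and r :: nat
    and \<sigma> :: "nat \<Rightarrow> real"
    and \<xi> :: "nat \<Rightarrow> real^'m"
    and \<xi>h :: "nat \<Rightarrow> real^'n"
    and p :: real
  assumes r_pos: "r \<ge> 1"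
    and rank: "rank A = r"
    and sigma_range: "\<And>j. j \<in> {1..r} \<Longrightarrow> 0 < \<sigma> j \<and> \<sigma> j \<le> 1"
    and sigma_sorted: "\<And>i j. i \<in> {1..r} \<Longrightarrow> j \<in> {1..r} \<Longrightarrow> i \<le> j \<Longrightarrow> \<sigma> j \<le> \<sigma> i"
    and xi_orth: "\<And>i j. i \<in> {1..r} \<Longrightarrow> j \<in> {1..r} \<Longrightarrow> \<xi> i \<bullet> \<xi> j = (if i = j then 1 else 0)"
    and xih_orth: "\<And>i j. i \<in> {1..r} \<Longrightarrow> j \<in> {1..r} \<Longrightarrow> \<xi>h i \<bullet> \<xi>h j = (if i = j then 1 else 0)"
    and right_sv: "\<And>j. j \<in> {1..r} \<Longrightarrow> A *v \<xi>h j = \<sigma> j *\<^sub>R \<xi> j"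
    and left_sv: "\<And>j. j \<in> {1..r} \<Longrightarrow> transpose A *v \<xi> j = \<sigma> j *\<^sub>R \<xi>h j"
    and p_ge: "p \<ge> 1"
  shows "\<exists>C1. \<forall>(\<alpha>::real) (\<phi>::real \<Rightarrow> real \<Rightarrow> real) (bc::nat \<Rightarrow> real) (bdc::nat \<Rightarrow> real) (f::real \<Rightarrow> real).
    ( \<alpha> > 0
    \<and> continuous_on {0..} f
    \<and> (\<forall>s t. 0 \<le> s \<and> s < t \<longrightarrow> f t < f s)
    \<and> (\<forall>t\<ge>0. 0 < f t \<and> f t \<le> 1)
    \<and> f 0 = 1
    \<and> (\<forall>j\<in>{1..r}. f (real j) = \<sigma> j)
    \<and> (f \<longlongrightarrow> 0) at_top
    \<and> mono_on {0..real r + 1} (\<lambda>t. \<bar>1 - \<phi> (f t) \<alpha>\<bar>)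
    \<and> mono_on {0..real r + 1} (\<lambda>t. \<bar>\<phi> (f t) \<alpha>\<bar> / f t) )
    \<longrightarrow>
    (let b = (\<Sum>j=1..r. bc j *\<^sub>R \<xi> j);
         b\<delta> = (\<Sum>j=1..r. bdc j *\<^sub>R \<xi> j);
         x = (\<Sum>j=1..r. (bc j / \<sigma> j) *\<^sub>R \<xi>h j);
         x\<alpha>\<delta> = (\<Sum>j=1..r. (bdc j * \<phi> (\<sigma> j) \<alpha> / \<sigma> j) *\<^sub>R \<xi>h j)
     in vec_pnorm p (x - x\<alpha>\<delta>)
        \<le> C1 * vec_infnorm x * Lp_norm_interval p (real r + 1) (\<lambda>t. 1 - \<phi> (f t) \<alpha>)
         + C1 * vec_infnorm (b - b\<delta>) * Lp_norm_interval p (real r + 1) (\<lambda>t. \<phi> (f t) \<alpha> / f t))"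
proof -
  have \<sigma>_pos: "\<And>j. j \<in> {1..r} \<Longrightarrow> 0 < \<sigma> j" using sigma_range by blast
  show ?thesis
    unfolding Let_def
    by (intro exI allI impI, elim conjE,
        rule filtered_solution_error_le[OF xi_orth xih_orth \<sigma>_pos p_ge]) auto
qed

end
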